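(* Let $G_{\mathrm{AndI}}$ be the $q$-grammar with master variables $\{x,y\}$, rule $x_j\mapsto q^jx_jy_{j+1}$, $y_j\mapsto q^jx_j$, and order AIO, with $q$-derivative $D$, and let $n\ge1$. Every term of $D^n(x_0)$ has the form $w=x_0\prod_{i\in\mathcal{I}}v_i$ (product in increasing order of $i$) for some $\mathcal{I}\subseteq\{1,\dots,n\}$ and $v_i\in\{x_i,y_i\}$. To such a word associate the step sequence $S=(s_1,\dots,s_n)$ with $s_i=U=(1,1)$ if $i\in\mathcal{I}$ and $v_i=x_i$, $s_i=L=(1,0)$ if $i\in\mathcal{I}$ and $v_i=y_i$, and $s_i=D^*=(1,-1)$ if $i\notin\mathcal{I}$. Then a word $w$ of this form is a term of $D^n(x_0)$ if and only if $S$ is a Motzkin path of length $n$ (a lattice path starting at height $0$ that never goes below height $0$ and ends at height $0$). Consequently the number of terms of $D^n(x_0)$ equals the $n$-th Motzkin number $M_n$.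
   Context: $\mathbb{K}$ is a commutative ring with unity and characteristic zero, $q$ an indeterminate. For a set $S$ of master variables, $\mathbb{S}=\{s_i:s\in S,\ i\ge0\}$ is a set of non-commuting variables, $F(\mathbb{S})$ the free group on $\mathbb{S}$, $\mathbb{E}=\mathbb{K}[q][F(\mathbb{S})]$ its group algebra. A rule $R$ assigns to each $s_i$ an element of $\mathbb{E}$, extended by $R(s_i^{-1})=-s_i^{-1}R(s_i)s_{i+1}^{-1}$. The up-arrow $\uparrow$ is the linear map replacing each letter $s_i^{\pm1}$ by $s_{i+1}^{\pm1}$. AIO stably reorders the letters of a word according to the position of their underlying variable in $x_0,y_0,x_1,y_1,\dots$. The $q$-derivative of a $q$-grammar $(S,R,\rho)$ is the $\mathbb{K}[q]$-linear map with $D(w_1\cdots w_n)=\sum_{j=1}^n\rho\big(w_1\cdots w_{j-1}R(w_j)\uparrow(w_{j+1}\cdots w_n)\big)$, $D^0=\mathrm{id}$, $D^k=D\circ D^{k-1}$. Writing an element of $\mathbb{E}$ as $\sum_{w\in F(\mathbb{S})}a_ww$, its terms are the words $w$ with $a_w\ne0$. *)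

theory Defs
  imports "HOL-Computational_Algebra.Polynomial"
begin

datatype var = X | Y

text \<open>A letter is (master variable, index, exponent sign): (s, i, True) = s_i, (s, i, False) = s_i^{-1}.
  Group elements of F(S) are represented by freely reduced lists of letters.\<close>
type_synonym letter = "var \<times> nat \<times> bool"
type_synonym word = "letter list"

definition inv_letter :: "letter \<Rightarrow> letter" where
  "inv_letter l = (case l of (s, i, e) \<Rightarrow> (s, i, \<not> e))"

definition reduce :: "letter list \<Rightarrow> word" where
  "reduce xs = foldr (\<lambda>a acc. case acc of [] \<Rightarrow> [a]
       | b # rest \<Rightarrow> (if b = inv_letter a then rest else a # acc)) xs []"

text \<open>Elements of E = K[q][F(S)] are represented as formal sums: lists of (coefficient, word);
  the element denoted is the sum of c*w. The coefficient of a word w is:\<close>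
type_synonym 'k elem = "('k poly \<times> word) list"

definition coeffE :: "'k::comm_ring_1 elem \<Rightarrow> word \<Rightarrow> 'k poly" where
  "coeffE A w = sum_list (map fst (filter (\<lambda>p. snd p = w) A))"

definition qv :: "'k::comm_ring_1 poly" where "qv = [:0, 1:]"

definition up_letter :: "letter \<Rightarrow> letter" where
  "up_letter l = (case l of (s, i, e) \<Rightarrow> (s, Suc i, e))"

definition up_word :: "word \<Rightarrow> word" where
  "up_word w = map up_letter w"

fun rule_pos :: "var \<Rightarrow> nat \<Rightarrow> 'k::comm_ring_1 elem" where
  "rule_pos X j = [(qv ^ j, [(X, j, True), (Y, Suc j, True)])]"
| "rule_pos Y j = [(qv ^ j, [(X, j, True)])]"

definition ruleAndI :: "letter \<Rightarrow> 'k::comm_ring_1 elem" where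
  "ruleAndI l = (case l of (s, i, e) \<Rightarrow>
     (if e then rule_pos s i
      else map (\<lambda>(c, u). (- c, reduce ([(s, i, False)] @ u @ [(s, Suc i, False)]))) (rule_pos s i)))"

text \<open>AIO: stable reordering of the letters by the position of their underlying variable
  in x_0, y_0, x_1, y_1, ...; the result is read as a group element (reduced).\<close>
definition aio_key :: "letter \<Rightarrow> nat" where
  "aio_key l = (case l of (s, i, e) \<Rightarrow> 2 * i + (if s = X then 0 else 1))"

definition aio :: "word \<Rightarrow> word" where
  "aio w = reduce (sort_key aio_key w)"

text \<open>q-derivative on a word: D(w_1...w_n) = sum_j rho(w_1...w_{j-1} R(w_j) up(w_{j+1}...w_n)).\<close>
definition Dword :: "word \<Rightarrow> 'k::comm_ring_1 elem" where
  "Dword w = concat (map (\<lambda>j. map (\<lambda>(c, u). (c, aio (reduce (take j w @ u @ up_word (drop (Suc j) w)))))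
                                   (ruleAndI (w ! j)))
                         [0..<length w])"

definition Dq :: "'k::comm_ring_1 elem \<Rightarrow> 'k elem" where
  "Dq A = concat (map (\<lambda>(c, u). map (\<lambda>(d, v). (c * d, v)) (Dword u)) A)"

definition x0_elem :: "'k::comm_ring_1 elem" where
  "x0_elem = [(1, [(X, 0, True)])]"

definition andI_word :: "nat set \<Rightarrow> (nat \<Rightarrow> var) \<Rightarrow> word" where
  "andI_word I v = (X, 0, True) # map (\<lambda>i. (v i, i, True)) (sorted_list_of_set I)"

text \<open>Steps: U = +1, L = 0, D* = -1 (heights of steps (1,1), (1,0), (1,-1)).\<close>
definition step_seq :: "nat \<Rightarrow> nat set \<Rightarrow> (nat \<Rightarrow> var) \<Rightarrow> int list" where
  "step_seq n I v = map (\<lambda>i. if i \<in> I then (if v i = X then 1 else 0) else -1) [1..<Suc n]"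

definition motzkin_path :: "int list \<Rightarrow> bool" where
  "motzkin_path s \<longleftrightarrow> set s \<subseteq> {-1, 0, 1} \<and>
     (\<forall>k \<le> length s. sum_list (take k s) \<ge> 0) \<and> sum_list s = 0"

definition motzkin_number :: "nat \<Rightarrow> nat" where
  "motzkin_number n = card {s. length s = n \<and> motzkin_path s}"

end

theory Submission
  imports Defs
begin

text \<open>
  Encode the word \<open>x\<^sub>0 v\<^sub>1 \<dots> v\<^sub>n\<close> by the step list \<open>1 # S\<close>: position \<open>i\<close> carries \<open>x\<^sub>i\<close> for an up
  step, \<open>y\<^sub>i\<close> for a level step and no letter for a down step. Such words have no inverse letters
  and are already AIO-sorted, so differentiating the letter at position \<open>j\<close> just replaces an up
  step by the pair up, level (\<open>x\<^sub>j \<mapsto> q\<^sup>j x\<^sub>j y\<^sub>j\<^sub>+\<^sub>1\<close>) or a level step by the pair up, down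
  (\<open>y\<^sub>j \<mapsto> q\<^sup>j x\<^sub>j\<close>), the up-arrow absorbing the shift of the letters behind it. Read as paths
  from height \<open>-1\<close>, these moves preserve the Motzkin conditions, and conversely every longer
  such path contains an up step followed by a level or down step, which can be contracted. All
  coefficients are powers of \<open>q\<close>, so nothing cancels: evaluated at \<open>q = 1\<close> the coefficient of a
  word counts its occurrences, which is nonzero in characteristic zero.
\<close>

definition step_letter :: "int \<Rightarrow> nat \<Rightarrow> letter" where
  "step_letter a i = (if a = 1 then X else Y, i, True)"

fun step_word :: "nat \<Rightarrow> int list \<Rightarrow> word" where
  "step_word k [] = []"
| "step_word k (a # t) = (if a = -1 then [] else [step_letter a k]) @ step_word (Suc k) t"

lemma step_word_append: "step_word k (xs @ ys) = step_word k xs @ step_word (k + length xs) ys"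
  by (induction xs arbitrary: k) auto

lemma up_word_step_word: "up_word (step_word k t) = step_word (Suc k) t"
  by (induction t arbitrary: k) (auto simp: up_word_def up_letter_def step_letter_def)

lemma mem_step_word:
  "l \<in> set (step_word k t) \<longleftrightarrow> (\<exists>i<length t. t ! i \<noteq> -1 \<and> l = step_letter (t ! i) (k + i))"
proof (induction t arbitrary: k)
  case Nil then show ?case by simp
next
  case (Cons a t)
  show ?case
    using Cons.IH[of "Suc k"] by (auto simp: Ex_less_Suc2)
qed

lemma step_word_inj:
  assumes "step_word k t = step_word k t'" "length t = length t'"
    and "set t \<subseteq> {-1, 0, 1}" "set t' \<subseteq> {-1, 0, 1}"
  shows "t = t'"
proof (rule nth_equalityI)
  have code: "t ! i = (if (X, k + i, True) \<in> set (step_word k t) then 1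
      else if (Y, k + i, True) \<in> set (step_word k t) then 0 else -1)"
    if "i < length t" "set t \<subseteq> {-1, 0, 1}" for t i
  proof -
    have "t ! i \<in> {-1, 0, 1}" using that nth_mem by blast
    then show ?thesis using that by (auto simp: mem_step_word step_letter_def)
  qed
  fix i assume i: "i < length t"
  have i': "i < length t'" using i assms(2) by simp
  show "t ! i = t' ! i"
    unfolding code[OF i assms(3)] code[OF i' assms(4)] assms(1) by (rule refl)
qed fact

lemma sorted_aio_key_step_word: "sorted (map aio_key (step_word k t))"
proof (induction t arbitrary: k)
  case Nil then show ?case by simp
next
  case (Cons a t)
  have "aio_key (step_letter a k) \<le> aio_key l" if "l \<in> set (step_word (Suc k) t)" for l
    using that by (auto simp: mem_step_word step_letter_def aio_key_def)
  then show ?case using Cons.IH[of "Suc k"] by auto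
qed

lemma reduce_Cons:
  "reduce (a # xs) = (case reduce xs of [] \<Rightarrow> [a]
     | b # rest \<Rightarrow> (if b = inv_letter a then rest else a # b # rest))"
  by (simp add: reduce_def split: list.split)

lemma reduce_no_inverse_letters:
  assumes "\<forall>(s, i, e) \<in> set xs. e"
  shows "reduce xs = xs"
  using assms
proof (induction xs)
  case Nil then show ?case by (simp add: reduce_def)
next
  case (Cons a xs)
  then show ?case
    by (cases xs) (auto simp: reduce_Cons inv_letter_def split: prod.splits)
qed

lemma reduce_step_word: "reduce (step_word k t) = step_word k t"
  by (rule reduce_no_inverse_letters) (auto simp: mem_step_word step_letter_def)

lemma aio_step_word: "aio (step_word k t) = step_word k t"
  by (simp add: aio_def sort_key_id_if_sorted sorted_aio_key_step_word reduce_step_word)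

lemma split_at_nth_filter:
  "j < length (filter P t) \<Longrightarrow> \<exists>xs b ys. t = xs @ b # ys \<and> P b \<and> length (filter P xs) = j"
proof (induction t arbitrary: j)
  case Nil then show ?case by simp
next
  case (Cons a t)
  show ?case
  proof (cases "P a \<and> j = 0")
    case True
    then have "a # t = [] @ a # t \<and> P a \<and> length (filter P []) = j" by simp
    then show ?thesis by blast
  next
    case False
    with Cons.prems have "(if P a then j - 1 else j) < length (filter P t)" by auto
    with Cons.IH obtain xs b ys where "t = xs @ b # ys" "P b"
      "length (filter P xs) = (if P a then j - 1 else j)"
      by blast
    with False have "a # t = (a # xs) @ b # ys \<and> P b \<and> length (filter P (a # xs)) = j"
      by auto
    then show ?thesis by blast
  qed
qed

lemma length_step_word: "length (step_word k t) = length (filter (\<lambda>a. a \<noteq> -1) t)"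
  by (induction t arbitrary: k) auto

lemma ruleAndI_step_letter:
  "b \<in> {0, 1} \<Longrightarrow> ruleAndI (step_letter b i) = [(qv ^ i, step_word i [1, b - 1])]"
  by (auto simp: ruleAndI_def step_letter_def)

definition Dword_at :: "word \<Rightarrow> nat \<Rightarrow> 'k::comm_ring_1 elem" where
  "Dword_at w j = map (\<lambda>(c, u). (c, aio (reduce (take j w @ u @ up_word (drop (Suc j) w)))))
     (ruleAndI (w ! j))"

lemma set_Dword: "set (Dword w) = (\<Union>j<length w. set (Dword_at w j))"
  by (auto simp: Dword_def Dword_at_def)

lemma Dword_at_step_word:
  assumes t: "t = xs @ b # ys" and b: "b \<in> {0, 1}"
  shows "Dword_at (step_word k t) (length (step_word k xs))
    = [(qv ^ (k + length xs), step_word k (xs @ 1 # (b - 1) # ys))]"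
proof -
  let ?i = "k + length xs"
  have w: "step_word k t = step_word k xs @ step_letter b ?i # step_word (Suc ?i) ys"
    using b by (auto simp: t step_word_append)
  have "step_word k xs @ step_word ?i [1, b - 1] @ step_word (Suc (Suc ?i)) ys
      = step_word k (xs @ 1 # (b - 1) # ys)"
    by (simp add: step_word_append)
  then have "aio (reduce (step_word k xs @ step_word ?i [1, b - 1]
      @ up_word (step_word (Suc ?i) ys))) = step_word k (xs @ 1 # (b - 1) # ys)"
    by (simp add: up_word_step_word reduce_step_word aio_step_word)
  then show ?thesis
    by (simp add: Dword_at_def w ruleAndI_step_letter[OF b] del: step_word.simps)
qed

lemma set_Dword_step_word:
  assumes "set t \<subseteq> {-1, 0, 1}"
  shows "set (Dword (step_word k t) :: 'k::comm_ring_1 elem)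
    = (\<lambda>(xs, b, ys). (qv ^ (k + length xs), step_word k (xs @ 1 # (b - 1) # ys)))
        ` {(xs, b, ys). t = xs @ b # ys \<and> b \<in> {0, 1}}"
    (is "_ = ?g ` ?D")
proof -
  have positions: "{..<length (step_word k t)} = (\<lambda>(xs, b, ys). length (step_word k xs)) ` ?D"
  proof (intro set_eqI iffI)
    fix j assume "j \<in> {..<length (step_word k t)}"
    then obtain xs b ys where "t = xs @ b # ys" "b \<noteq> -1" "j = length (step_word k xs)"
      using split_at_nth_filter[of j "\<lambda>a. a \<noteq> -1" t] by (auto simp: length_step_word)
    moreover from this have "b \<in> {0, 1}" using assms by auto
    ultimately have "(xs, b, ys) \<in> ?D" "j = (\<lambda>(xs, b, ys). length (step_word k xs)) (xs, b, ys)"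
      by simp_all
    then show "j \<in> (\<lambda>(xs, b, ys). length (step_word k xs)) ` ?D" by (rule rev_image_eqI)
  qed (auto simp: step_word_append)
  have "set (Dword_at (step_word k t) (length (step_word k xs)) :: 'k elem) = {?g (xs, b, ys)}"
    if "(xs, b, ys) \<in> ?D" for xs b ys
    using that by (simp add: Dword_at_step_word)
  then have "set (Dword (step_word k t) :: 'k elem) = (\<Union>d\<in>?D. {?g d})"
    unfolding set_Dword positions SUP_image by (intro SUP_cong) auto
  then show ?thesis by (simp only: UNION_singleton_eq_range)
qed

text \<open>Heights are checked after each step, so a path may start at height \<open>-1\<close>; the codes of terms
  are such paths, their forced first up step standing for \<open>x\<^sub>0\<close>.\<close>

fun motzkin_from :: "int \<Rightarrow> int list \<Rightarrow> bool" where
  "motzkin_from h [] \<longleftrightarrow> h = 0"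
| "motzkin_from h (a # s) \<longleftrightarrow> a \<in> {-1, 0, 1} \<and> 0 \<le> h + a \<and> motzkin_from (h + a) s"

lemma motzkin_from_iff:
  assumes "0 \<le> h"
  shows "motzkin_from h s \<longleftrightarrow> set s \<subseteq> {-1, 0, 1}
    \<and> (\<forall>k\<le>length s. 0 \<le> h + sum_list (take k s)) \<and> h + sum_list s = 0"
  using assms
proof (induction s arbitrary: h)
  case Nil then show ?case by simp
next
  case (Cons a s)
  have "(\<forall>k\<le>length (a # s). 0 \<le> h + sum_list (take k (a # s)))
      \<longleftrightarrow> (\<forall>k\<le>length s. 0 \<le> h + a + sum_list (take k s))"
    using Cons.prems by (simp add: less_Suc_eq_le[symmetric] All_less_Suc2 add.assoc)
  then show ?case using Cons.IH[of "h + a"] by (fastforce simp: add.assoc)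
qed

lemma motzkin_path_iff_motzkin_from: "motzkin_path s \<longleftrightarrow> motzkin_from 0 s"
  by (simp add: motzkin_path_def motzkin_from_iff)

lemma motzkin_from_steps: "motzkin_from h s \<Longrightarrow> set s \<subseteq> {-1, 0, 1}"
  by (induction s arbitrary: h) auto

lemma motzkin_from_split_step:
  assumes "-1 \<le> h" "b \<in> {0, 1}"
  shows "motzkin_from h (xs @ 1 # (b - 1) # ys) \<longleftrightarrow> motzkin_from h (xs @ b # ys)"
  using assms(1) by (induction xs arbitrary: h) (use assms(2) in auto)

lemma motzkin_from_last: "motzkin_from h s \<Longrightarrow> 0 \<le> h \<Longrightarrow> s \<noteq> [] \<Longrightarrow> last s \<noteq> 1"
  by (induction s arbitrary: h) (auto split: if_splits)

lemma up_followed_by_non_up: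
  "last (1 # s) \<noteq> 1 \<Longrightarrow> \<exists>xs b ys. 1 # s = xs @ 1 # b # ys \<and> b \<noteq> 1"
proof (induction s)
  case Nil then show ?case by simp
next
  case (Cons c s)
  show ?case
  proof (cases "c = 1")
    case True
    with Cons obtain xs b ys where "1 # s = xs @ 1 # b # ys" "b \<noteq> 1" by auto
    with True have "1 # c # s = (1 # xs) @ 1 # b # ys" by simp
    with \<open>b \<noteq> 1\<close> show ?thesis by blast
  next
    case False
    then show ?thesis by (intro exI[of _ "[]"]) auto
  qed
qed

definition motzkin_codes :: "nat \<Rightarrow> int list set" where
  "motzkin_codes n = {t. length t = Suc n \<and> motzkin_from (-1) t}"

definition step_successors :: "int list \<Rightarrow> int list set" where
  "step_successors t
    = (\<lambda>(xs, b, ys). xs @ 1 # (b - 1) # ys) ` {(xs, b, ys). t = xs @ b # ys \<and> b \<in> {0, 1}}"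

lemma motzkin_codes_eq: "motzkin_codes n = Cons 1 ` {s. length s = n \<and> motzkin_path s}"
proof -
  have "motzkin_from (-1) t \<longleftrightarrow> (\<exists>s. t = 1 # s \<and> motzkin_from 0 s)" for t
    by (cases t) auto
  then show ?thesis
    by (auto simp: motzkin_codes_def motzkin_path_iff_motzkin_from)
qed

lemma motzkin_codes_steps: "t \<in> motzkin_codes n \<Longrightarrow> set t \<subseteq> {-1, 0, 1}"
  by (auto simp: motzkin_codes_def dest: motzkin_from_steps)

lemma motzkin_codes_Suc: "motzkin_codes (Suc n) = (\<Union>t\<in>motzkin_codes n. step_successors t)"
proof
  show "motzkin_codes (Suc n) \<subseteq> (\<Union>t\<in>motzkin_codes n. step_successors t)"
  proof
    fix t' assume t': "t' \<in> motzkin_codes (Suc n)"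
    then obtain s where s: "t' = 1 # s" "motzkin_from 0 s" "length s = Suc n"
      unfolding motzkin_codes_def by (cases t') auto
    have "last (1 # s) \<noteq> 1"
      using motzkin_from_last[OF s(2)] s(3) by auto
    then obtain xs c ys where split: "t' = xs @ 1 # c # ys" "c \<noteq> 1"
      using up_followed_by_non_up s(1) by blast
    have "c \<in> {-1, 0}" using split motzkin_codes_steps[OF t'] by auto
    then have "c + 1 \<in> {0, 1}" by auto
    define t where "t = xs @ (c + 1) # ys"
    have t'_eq: "t' = xs @ 1 # ((c + 1) - 1) # ys" using split(1) by simp
    have "t' \<in> step_successors t"
      unfolding step_successors_def t_def
      by (rule rev_image_eqI[of "(xs, c + 1, ys)"]) (use \<open>c + 1 \<in> {0, 1}\<close> t'_eq in simp_all)
    moreover have "motzkin_from (-1) t"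
      using t' motzkin_from_split_step[OF _ \<open>c + 1 \<in> {0, 1}\<close>, of "-1" xs ys]
      unfolding motzkin_codes_def t_def t'_eq by simp
    then have "t \<in> motzkin_codes n"
      using t' unfolding motzkin_codes_def t_def split(1) by simp
    ultimately show "t' \<in> (\<Union>t\<in>motzkin_codes n. step_successors t)" by blast
  qed
next
  show "(\<Union>t\<in>motzkin_codes n. step_successors t) \<subseteq> motzkin_codes (Suc n)"
  proof
    fix t' assume "t' \<in> (\<Union>t\<in>motzkin_codes n. step_successors t)"
    then obtain xs b ys where t: "xs @ b # ys \<in> motzkin_codes n" and b: "b \<in> {0, 1}"
      and t': "t' = xs @ 1 # (b - 1) # ys"
      unfolding step_successors_def by auto
    then show "t' \<in> motzkin_codes (Suc n)"
      using motzkin_from_split_step[of "-1" b xs ys] by (simp add: motzkin_codes_def)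
  qed
qed

definition qpower_coeffs :: "'k::comm_ring_1 elem \<Rightarrow> bool" where
  "qpower_coeffs A \<longleftrightarrow> (\<forall>p\<in>set A. \<exists>i. fst p = qv ^ i)"

lemma poly_one_sum_qpower_coeffs:
  "qpower_coeffs A \<Longrightarrow> poly (sum_list (map fst A)) 1 = of_nat (length A)"
  by (induction A) (auto simp: qpower_coeffs_def qv_def poly_power)

lemma coeffE_nonzero_iff:
  fixes A :: "'k::{comm_ring_1, ring_char_0} elem"
  assumes "qpower_coeffs A"
  shows "coeffE A w \<noteq> 0 \<longleftrightarrow> w \<in> snd ` set A"
proof -
  let ?Aw = "filter (\<lambda>p. snd p = w) A"
  have "qpower_coeffs ?Aw" using assms by (auto simp: qpower_coeffs_def)
  then have "poly (coeffE A w) 1 = of_nat (length ?Aw)"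
    unfolding coeffE_def by (rule poly_one_sum_qpower_coeffs)
  then have "coeffE A w \<noteq> 0 \<longleftrightarrow> ?Aw \<noteq> []"
    by (auto simp: coeffE_def)
  also have "\<dots> \<longleftrightarrow> w \<in> snd ` set A"
    by (auto simp: filter_empty_conv)
  finally show ?thesis .
qed

lemma mem_Dq:
  "(e, v) \<in> set (Dq A) \<longleftrightarrow> (\<exists>c u d. (c, u) \<in> set A \<and> (d, v) \<in> set (Dword u) \<and> e = c * d)"
  by (force simp: Dq_def)

lemma qpower_coeffs_Dq:
  fixes A :: "'k::comm_ring_1 elem"
  assumes "qpower_coeffs A" "\<And>u. u \<in> snd ` set A \<Longrightarrow> qpower_coeffs (Dword u :: 'k elem)"
  shows "qpower_coeffs (Dq A)"
  unfolding qpower_coeffs_def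
proof
  fix p assume "p \<in> set (Dq A)"
  then obtain c u d where cu: "(c, u) \<in> set A" and d: "(d, snd p) \<in> set (Dword u)"
    and p: "fst p = c * d"
    using mem_Dq[of "fst p" "snd p"] by auto
  obtain i where "c = qv ^ i" using assms(1) cu unfolding qpower_coeffs_def by fastforce
  moreover have "u \<in> snd ` set A" using cu by (rule rev_image_eqI) simp
  then obtain j where "d = qv ^ j" using assms(2) d unfolding qpower_coeffs_def by fastforce
  ultimately have "fst p = qv ^ (i + j)" using p by (simp add: power_add)
  then show "\<exists>i. fst p = qv ^ i" ..
qed

lemma support_Dq:
  fixes A :: "'k::comm_ring_1 elem"
  shows "snd ` set (Dq A) = (\<Union>u\<in>snd ` set A. snd ` set (Dword u :: 'k elem))"
  unfolding set_eq_iff UN_iff Bex_def snd_eq_Range Range_iff mem_Dq by blast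

lemma qpower_coeffs_Dword_step_word:
  "set t \<subseteq> {-1, 0, 1} \<Longrightarrow> qpower_coeffs (Dword (step_word k t) :: 'k::comm_ring_1 elem)"
  unfolding qpower_coeffs_def by (auto simp: set_Dword_step_word)

lemma support_Dword_step_word:
  "set t \<subseteq> {-1, 0, 1}
   \<Longrightarrow> snd ` set (Dword (step_word k t) :: 'k::comm_ring_1 elem) = step_word k ` step_successors t"
  unfolding set_Dword_step_word step_successors_def image_image by (simp add: case_prod_beta)

lemma iterated_Dq_x0:
  "qpower_coeffs ((Dq ^^ n) (x0_elem :: 'k::comm_ring_1 elem))
   \<and> snd ` set ((Dq ^^ n) (x0_elem :: 'k elem)) = step_word 0 ` motzkin_codes n"
proof (induction n)
  case 0
  have "motzkin_codes 0 = {[1]}" by (auto simp: motzkin_codes_def length_Suc_conv)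
  then show ?case by (auto simp: x0_elem_def qpower_coeffs_def step_letter_def intro: exI[of _ 0])
next
  case (Suc n)
  then have qpower: "qpower_coeffs ((Dq ^^ n) (x0_elem :: 'k elem))"
    and support: "snd ` set ((Dq ^^ n) (x0_elem :: 'k elem)) = step_word 0 ` motzkin_codes n"
    by blast+
  have "qpower_coeffs (Dword u :: 'k elem)"
    if "u \<in> snd ` set ((Dq ^^ n) (x0_elem :: 'k elem))" for u
    using that qpower_coeffs_Dword_step_word motzkin_codes_steps unfolding support by blast
  then have "qpower_coeffs ((Dq ^^ Suc n) (x0_elem :: 'k elem))"
    using qpower_coeffs_Dq[OF qpower] by simp
  moreover have
    "snd ` set ((Dq ^^ Suc n) (x0_elem :: 'k elem)) = step_word 0 ` motzkin_codes (Suc n)"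
  proof -
    have "snd ` set ((Dq ^^ Suc n) (x0_elem :: 'k elem))
        = (\<Union>t\<in>motzkin_codes n. snd ` set (Dword (step_word 0 t) :: 'k elem))"
      by (simp add: support_Dq support)
    also have "\<dots> = (\<Union>t\<in>motzkin_codes n. step_word 0 ` step_successors t)"
      using support_Dword_step_word motzkin_codes_steps by (intro SUP_cong) blast+
    also have "\<dots> = step_word 0 ` motzkin_codes (Suc n)"
      by (simp add: motzkin_codes_Suc image_UN)
    finally show ?thesis .
  qed
  ultimately show ?case by blast
qed

lemma terms_iterated_Dq_x0:
  "{w. coeffE ((Dq ^^ n) (x0_elem :: 'k::{comm_ring_1, ring_char_0} elem)) w \<noteq> 0}
   = step_word 0 ` motzkin_codes n"
proof -
  let ?A = "(Dq ^^ n) (x0_elem :: 'k elem)"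
  have "qpower_coeffs ?A" "snd ` set ?A = step_word 0 ` motzkin_codes n"
    using iterated_Dq_x0 by blast+
  then show ?thesis by (simp add: coeffE_nonzero_iff)
qed

lemma step_word_map_upt:
  "step_word k (map f [k..<k + m])
    = map (\<lambda>i. step_letter (f i) i) (filter (\<lambda>i. f i \<noteq> -1) [k..<k + m])"
  by (induction m) (simp_all add: step_word_append)

lemma sorted_list_of_set_eq_filter_upt:
  assumes "I \<subseteq> {k..<m}"
  shows "sorted_list_of_set I = filter (\<lambda>i. i \<in> I) [k..<m]"
proof -
  have "I = set (filter (\<lambda>i. i \<in> I) [k..<m])" using assms by auto
  then have "sorted_list_of_set I = sort (remdups (filter (\<lambda>i. i \<in> I) [k..<m]))"
    by (metis sorted_list_of_set_sort_remdups)
  then show ?thesis by (simp add: sorted_wrt_filter distinct_remdups_id sorted_sort_id)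
qed

lemma andI_word_eq_step_word:
  assumes "I \<subseteq> {1..n}"
  shows "andI_word I v = step_word 0 (1 # step_seq n I v)"
proof -
  let ?f = "\<lambda>i. if i \<in> I then if v i = X then 1 else 0 else -1 :: int"
  have "filter (\<lambda>i. ?f i \<noteq> -1) [1..<1 + n] = filter (\<lambda>i. i \<in> I) [1..<1 + n]"
    by (rule filter_cong) auto
  moreover have "step_letter (?f i) i = (v i, i, True)" if "i \<in> I" for i
    using that by (cases "v i") (simp_all add: step_letter_def)
  ultimately have "step_word 1 (step_seq n I v)
      = map (\<lambda>i. (v i, i, True)) (filter (\<lambda>i. i \<in> I) [1..<Suc n])"
    using step_word_map_upt[of 1 ?f n] by (simp add: step_seq_def)
  moreover have "sorted_list_of_set I = filter (\<lambda>i. i \<in> I) [1..<Suc n]"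
    using assms by (intro sorted_list_of_set_eq_filter_upt) auto
  ultimately show ?thesis by (simp add: andI_word_def step_letter_def)
qed

lemma length_step_seq: "length (step_seq n I v) = n"
  by (simp add: step_seq_def)

lemma step_seq_steps: "set (step_seq n I v) \<subseteq> {-1, 0, 1}"
  by (auto simp: step_seq_def)

lemma ex_step_seq_eq:
  assumes "length s = n" "set s \<subseteq> {-1, 0, 1}"
  shows "\<exists>I v. I \<subseteq> {1..n} \<and> step_seq n I v = s"
proof -
  define I where "I = {i \<in> {1..n}. s ! (i - 1) \<noteq> -1}"
  define v where "v i = (if s ! (i - 1) = 1 then X else Y)" for i
  have "step_seq n I v = s"
  proof (rule nth_equalityI)
    show "length (step_seq n I v) = length s" by (simp add: length_step_seq assms(1))
  next
    fix i assume "i < length (step_seq n I v)"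
    then have i: "i < n" by (simp add: length_step_seq)
    then have "s ! i \<in> {-1, 0, 1}" using assms nth_mem by blast
    then show "step_seq n I v ! i = s ! i"
      using i by (auto simp: step_seq_def I_def v_def simp del: upt_Suc)
  qed
  moreover have "I \<subseteq> {1..n}" by (auto simp: I_def)
  ultimately show ?thesis by blast
qed

lemma inj_on_step_word: "inj_on (step_word k) {t. length t = m \<and> set t \<subseteq> {-1, 0, 1}}"
  by (rule inj_onI) (auto intro: step_word_inj)

theorem proposition6p9:
  fixes n :: nat
  assumes "n \<ge> 1"
  defines "T \<equiv> {w. coeffE ((Dq ^^ n) (x0_elem :: ('k::{comm_ring_1, ring_char_0}) elem)) w \<noteq> 0}"
  shows "(\<forall>w \<in> T. \<exists>I v. I \<subseteq> {1..n} \<and> w = andI_word I v)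
     \<and> (\<forall>I v. I \<subseteq> {1..n} \<longrightarrow> (andI_word I v \<in> T \<longleftrightarrow> motzkin_path (step_seq n I v)))
     \<and> card T = motzkin_number n"
proof -
  let ?paths = "{s. length s = n \<and> motzkin_path s}"
  let ?V = "{t. length t = Suc n \<and> set t \<subseteq> {-1, 0, 1}}"
  have T: "T = step_word 0 ` Cons 1 ` ?paths"
    unfolding T_def terms_iterated_Dq_x0 motzkin_codes_eq ..
  have paths_V: "Cons 1 ` ?paths \<subseteq> ?V"
    by (auto simp: motzkin_path_def)
  have "\<exists>I v. I \<subseteq> {1..n} \<and> w = andI_word I v" if w: "w \<in> T" for w
  proof -
    obtain s where "w = step_word 0 (1 # s)" "length s = n" "motzkin_path s"
      using w unfolding T by blast
    moreover from this obtain I v where "I \<subseteq> {1..n}" "step_seq n I v = s"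
      using ex_step_seq_eq[of s n] by (auto simp: motzkin_path_def)
    ultimately show ?thesis using andI_word_eq_step_word by metis
  qed
  moreover have "andI_word I v \<in> T \<longleftrightarrow> motzkin_path (step_seq n I v)" if "I \<subseteq> {1..n}" for I v
  proof -
    have "1 # step_seq n I v \<in> ?V" by (simp add: length_step_seq step_seq_steps)
    then show ?thesis
      unfolding T andI_word_eq_step_word[OF that]
        inj_on_image_mem_iff[OF inj_on_step_word \<open>_ \<in> ?V\<close> paths_V]
      by (auto simp: length_step_seq)
  qed
  moreover have "card T = motzkin_number n"
    unfolding T motzkin_number_def
    using inj_on_subset[OF inj_on_step_word paths_V] by (simp add: card_image)
  ultimately show ?thesis by blast
qed

end
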